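(* Let $q\ge 2$, $n\ge 1$ and $\varepsilon\in\mathbb{N}$ with $\varepsilon\le n$. Let $x\in\mathbb{Z}_q^n$ be a hidden vector, and suppose the attacker has access to an oracle $\texttt{Match}_{x,\varepsilon}$ which, on a query $y\in\mathbb{Z}_q^n$, returns $1$ if $d(x,y)\le\varepsilon$ and $0$ otherwise, and which additionally reveals, whenever $d(x,y)\le\varepsilon$, the error positions $\{i: x_i\neq y_i\}$ together with the corresponding error values (enough to correct $y_i$ to $x_i$ at each such position). Then there is an adaptive query strategy that recovers $x$ using $\mathcal{O}(q^{n-\varepsilon})$ queries to $\texttt{Match}_{x,\varepsilon}$.
   Context: $\mathbb{Z}_q^n=\{0,\dots,q-1\}^n$ is equipped with the Hamming distance $d(x,y)=|\{i\in\{1,\dots,n\}: x_i\neq y_i\}|$. The attacker may choose each query adaptively based on previous oracle answers; complexity is measured as the number of oracle queries. *)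

theory Defs
  imports Complex_Main
begin

text \<open>Z_q^n as lists of length n with entries in {0..q-1}.\<close>
definition vecs :: "nat \<Rightarrow> nat \<Rightarrow> nat list set" where
  "vecs q n = {xs. length xs = n \<and> set xs \<subseteq> {..<q}}"

definition hdist :: "nat list \<Rightarrow> nat list \<Rightarrow> nat" where
  "hdist x y = card {i. i < length x \<and> x ! i \<noteq> y ! i}"

text \<open>Oracle Match_{x,eps}: None encodes answer 0; Some E encodes answer 1 together with
  the error positions i and the corresponding correct values x_i.\<close>
definition match_oracle :: "nat \<Rightarrow> nat list \<Rightarrow> nat list \<Rightarrow> (nat \<times> nat) set option" where
  "match_oracle eps x y =
     (if hdist x y \<le> eps then Some {(i, x ! i) | i. i < length x \<and> x ! i \<noteq> y ! i} else None)"

text \<open>Adaptive query strategies as decision trees.\<close>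
datatype strat = Done "nat list" | Ask "nat list" "(nat \<times> nat) set option \<Rightarrow> strat"

primrec run :: "nat \<Rightarrow> nat list \<Rightarrow> strat \<Rightarrow> nat list list \<times> nat list" where
  "run eps x (Done r) = ([], r)"
| "run eps x (Ask y f) =
     (let (qs, r) = run eps x (f (match_oracle eps x y)) in (y # qs, r))"

end

theory Submission
  imports Defs
begin

text \<open>Every x in Z_q^n lies within distance eps of the vector obtained by keeping its first n - eps
  coordinates and zeroing the rest. Querying all q^(n - eps) vectors of this shape in turn, the
  oracle eventually answers with the error set of such a query, and correcting that query yields x.\<close>

definition apply_corrections :: "nat list \<Rightarrow> (nat \<times> nat) set \<Rightarrow> nat list" where
  "apply_corrections y E =
     map (\<lambda>i. if i \<in> fst ` E then (SOME v. (i, v) \<in> E) else y ! i) [0..<length y]"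

lemma apply_corrections_errors:
  assumes "length y = length x"
  shows "apply_corrections y {(i, x ! i) | i. i < length x \<and> x ! i \<noteq> y ! i} = x"
    (is "apply_corrections y ?E = x")
proof (rule nth_equalityI)
  show "length (apply_corrections y ?E) = length x"
    using assms by (simp add: apply_corrections_def)
next
  fix i assume "i < length (apply_corrections y ?E)"
  then have i: "i < length x"
    using assms by (simp add: apply_corrections_def)
  show "apply_corrections y ?E ! i = x ! i"
  proof (cases "x ! i = y ! i")
    case True
    then show ?thesis using i assms by (auto simp: apply_corrections_def image_iff)
  next
    case False
    then have "i \<in> fst ` ?E" using i by (auto simp: image_iff)
    moreover have "(SOME v. (i, v) \<in> ?E) = x ! i"
      using False i by (intro some_equality) auto
    ultimately show ?thesis using i assms by (simp add: apply_corrections_def)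
  qed
qed

fun try_each :: "nat list list \<Rightarrow> strat" where
  "try_each [] = Done []"
| "try_each (y # ys) =
     Ask y (\<lambda>a. case a of None \<Rightarrow> try_each ys | Some E \<Rightarrow> Done (apply_corrections y E))"

lemma set_queries_try_each: "set (fst (run eps x (try_each ys))) \<subseteq> set ys"
  by (induction ys) (auto simp: split_beta split: option.split)

lemma length_queries_try_each: "length (fst (run eps x (try_each ys))) \<le> length ys"
  by (induction ys) (auto simp: split_beta split: option.split)

lemma output_try_each:
  assumes "\<forall>y \<in> set ys. length y = length x" and "\<exists>y \<in> set ys. hdist x y \<le> eps"
  shows "snd (run eps x (try_each ys)) = x"
  using assms
proof (induction ys)
  case Nil
  then show ?case by simp
next
  case (Cons y ys)
  then show ?case
    by (cases "hdist x y \<le> eps")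
       (auto simp: match_oracle_def split_beta intro: apply_corrections_errors)
qed

lemma hdist_take_append_le:
  assumes "length zs = length x - k"
  shows "hdist x (take k x @ zs) \<le> length x - k"
proof -
  have "{i. i < length x \<and> x ! i \<noteq> (take k x @ zs) ! i} \<subseteq> {k..<length x}"
    by (auto simp: nth_append)
  then have "hdist x (take k x @ zs) \<le> card {k..<length x}"
    unfolding hdist_def by (intro card_mono) auto
  then show ?thesis by simp
qed

definition zero_padded :: "nat \<Rightarrow> nat \<Rightarrow> nat \<Rightarrow> nat list list" where
  "zero_padded q n eps = map (\<lambda>p. p @ replicate eps 0) (List.n_lists (n - eps) [0..<q])"

lemma length_zero_padded: "length (zero_padded q n eps) = q ^ (n - eps)"
  by (simp add: zero_padded_def length_n_lists)

lemma zero_padded_subset_vecs: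
  assumes "q > 0" and "eps \<le> n"
  shows "set (zero_padded q n eps) \<subseteq> vecs q n"
  using assms by (auto simp: zero_padded_def set_n_lists vecs_def)

lemma take_padded_in_zero_padded:
  assumes "x \<in> vecs q n"
  shows "take (n - eps) x @ replicate eps 0 \<in> set (zero_padded q n eps)"
proof -
  have "set (take (n - eps) x) \<subseteq> {0..<q}"
    using assms set_take_subset[of "n - eps" x] by (auto simp: vecs_def)
  moreover have "length (take (n - eps) x) = n - eps"
    using assms by (simp add: vecs_def)
  ultimately show ?thesis by (auto simp: zero_padded_def set_n_lists)
qed

theorem theorem3:
  shows "\<exists>C::real. \<forall>q n eps::nat. q \<ge> 2 \<longrightarrow> n \<ge> 1 \<longrightarrow> eps \<le> n \<longrightarrow>
     (\<exists>S::strat. \<forall>x \<in> vecs q n.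
        snd (run eps x S) = x \<and> set (fst (run eps x S)) \<subseteq> vecs q n \<and>
        real (length (fst (run eps x S))) \<le> C * real q ^ (n - eps))"
proof (intro exI[of _ 1] allI impI)
  fix q n eps :: nat
  assume "q \<ge> 2" "n \<ge> 1" "eps \<le> n"
  let ?S = "try_each (zero_padded q n eps)"
  have candidates: "set (zero_padded q n eps) \<subseteq> vecs q n"
    using \<open>q \<ge> 2\<close> \<open>eps \<le> n\<close> by (intro zero_padded_subset_vecs) auto
  have "snd (run eps x ?S) = x \<and> set (fst (run eps x ?S)) \<subseteq> vecs q n \<and>
        real (length (fst (run eps x ?S))) \<le> 1 * real q ^ (n - eps)" if x: "x \<in> vecs q n" for x
  proof (intro conjI)
    have "hdist x (take (n - eps) x @ replicate eps 0) \<le> eps"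
      using hdist_take_append_le[of "replicate eps 0" x "n - eps"] x \<open>eps \<le> n\<close>
      by (simp add: vecs_def)
    then show "snd (run eps x ?S) = x"
      using x candidates take_padded_in_zero_padded[OF x]
      by (intro output_try_each) (auto simp: vecs_def)
    show "set (fst (run eps x ?S)) \<subseteq> vecs q n"
      using set_queries_try_each candidates by blast
    show "real (length (fst (run eps x ?S))) \<le> 1 * real q ^ (n - eps)"
      using length_queries_try_each[of eps x "zero_padded q n eps"]
      by (simp add: length_zero_padded flip: of_nat_power)
  qed
  then show "\<exists>S. \<forall>x \<in> vecs q n. snd (run eps x S) = x \<and> set (fst (run eps x S)) \<subseteq> vecs q n \<and>
        real (length (fst (run eps x S))) \<le> 1 * real q ^ (n - eps)"
    by blast
qed

end
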